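(* Let $n\geq2$ be even, $M\geq3$, and $0<\beta\leq n$. Suppose that $\beta\equiv \frac{Mn}{2}\pmod 2$, and that if $Mn\equiv 2\pmod 4$ and $n>2$ then $\beta\neq1$. Then $(n-\beta,\beta)\in\mathrm{HWP}(C_M[n];M,Mn)$.
   Context: $C_M[n]$ denotes the lexicographic product of the $M$-cycle with the empty graph on $n$ vertices: vertex set $\mathbb Z_M\times\mathbb Z_n$, with $(i,x)(j,y)$ an edge iff $j-i\equiv\pm1\pmod M$. A $C_k$-factor of a graph $G$ is a spanning subgraph of $G$ all of whose components are cycles of length $k$. For a graph $G$ and integers $M,N\ge3$, $\mathrm{HWP}(G;M,N)$ is the set of pairs $(\alpha,\beta)$ of nonnegative integers such that $G$ admits a set of $\alpha$ $C_M$-factors and $\beta$ $C_N$-factors whose edge sets partition $E(G)$. *)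

theory Defs
  imports Main
begin

text \<open>Undirected simple graphs are given by a vertex set V and a set E of
  2-element vertex sets (edges).\<close>

definition cycle_edges :: "'a list \<Rightarrow> 'a set set" where
  "cycle_edges vs = {{vs ! i, vs ! ((i + 1) mod length vs)} | i. i < length vs}"

definition is_cycle :: "nat \<Rightarrow> 'a set set \<Rightarrow> bool" where
  "is_cycle k C \<longleftrightarrow> k \<ge> 3 \<and> (\<exists>vs. length vs = k \<and> distinct vs \<and> C = cycle_edges vs)"

definition is_Ck_factor :: "nat \<Rightarrow> 'a set \<Rightarrow> 'a set set \<Rightarrow> 'a set set \<Rightarrow> bool" where
  "is_Ck_factor k V E F \<longleftrightarrow> F \<subseteq> E \<and>
     (\<exists>\<C>. (\<forall>C\<in>\<C>. is_cycle k C) \<and> \<Union>\<C> = F \<and>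
          (\<forall>C\<in>\<C>. \<forall>D\<in>\<C>. C \<noteq> D \<longrightarrow> \<Union>C \<inter> \<Union>D = {}) \<and>
          \<Union>F = V)"

definition HWP :: "'a set \<Rightarrow> 'a set set \<Rightarrow> nat \<Rightarrow> nat \<Rightarrow> (nat \<times> nat) set" where
  "HWP V E M N = {(\<alpha>, \<beta>). \<exists>F :: nat \<Rightarrow> 'a set set.
      (\<forall>i<\<alpha>. is_Ck_factor M V E (F i)) \<and>
      (\<forall>i. \<alpha> \<le> i \<and> i < \<alpha> + \<beta> \<longrightarrow> is_Ck_factor N V E (F i)) \<and>
      (\<forall>i<\<alpha> + \<beta>. \<forall>j<\<alpha> + \<beta>. i \<noteq> j \<longrightarrow> F i \<inter> F j = {}) \<and>
      (\<Union>i<\<alpha> + \<beta>. F i) = E}"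

text \<open>C_M[n] = lexicographic product of the M-cycle with the empty graph on n
  vertices; vertex (i,x) with i in Z_M (represented by 0..M-1), x in Z_n.\<close>
definition lexV :: "nat \<Rightarrow> nat \<Rightarrow> (nat \<times> nat) set" where
  "lexV M n = {0..<M} \<times> {0..<n}"

definition lexE :: "nat \<Rightarrow> nat \<Rightarrow> (nat \<times> nat) set set" where
  "lexE M n = {{(i, x), (j, y)} | i x j y. i < M \<and> j < M \<and> x < n \<and> y < n \<and>
                 ((j + M - i) mod M = 1 \<or> (i + M - j) mod M = 1)}"

end

theory Submission
  imports Defs "HOL-Number_Theory.Cong"
begin

text \<open>Between consecutive levels \<open>i, i + 1\<close> of \<open>C\<^sub>M[n]\<close> the edges are the pairs
  \<open>((i, y), (i + 1, y + \<delta>))\<close> with \<open>\<delta> \<in> \<int>\<^sub>n\<close>. Hence an \<open>n \<times> M\<close> array whose columns are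
  permutations of \<open>\<int>\<^sub>n\<close> splits the edge set into \<open>n\<close> 2-factors, row \<open>r\<close> joining
  \<open>(i, y)\<close> to \<open>(i + 1, y + d\<^sub>r(i))\<close>. Going once around the levels shifts a vertex by the
  row sum \<open>s\<^sub>r\<close>, so the factor of row \<open>r\<close> is a \<open>C\<^sub>M\<close>-factor when \<open>s\<^sub>r \<equiv> 0\<close> and a
  Hamilton cycle when \<open>s\<^sub>r\<close> is a unit of \<open>\<int>\<^sub>n\<close>. It remains to build arrays with exactly
  \<open>\<beta>\<close> unit rows and all other rows zero. Appending column pairs \<open>r, -r\<close> reduces this
  to \<open>M = 2\<close> and \<open>M = 3\<close>. For \<open>M = 2\<close> the columns \<open>r\<close> and \<open>-\<sigma>(r)\<close> work, where \<open>\<sigma>\<close>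
  swaps adjacent pairs among the first \<open>\<beta>\<close> rows; for \<open>M = 3\<close> and \<open>n = 2m\<close> three explicit
  arrays, according to whether \<open>\<beta> \<ge> m\<close> and to the parity of \<open>m\<close>, have such row sums.\<close>

lemma periodic_walk_is_cycle:
  fixes w :: "nat \<Rightarrow> 'a" and step :: "'a \<Rightarrow> 'a"
  assumes L3: "L \<ge> 3" and walk: "\<And>t. w (Suc t) = step (w t)" and closed: "w L = w 0"
    and inj: "inj_on w {0..<L}"
  shows "is_cycle L (cycle_edges (map w [0..<L]))"
    and "cycle_edges (map w [0..<L]) = (\<lambda>t. {w t, step (w t)}) ` {0..<L}"
    and "\<Union>(cycle_edges (map w [0..<L])) = w ` {0..<L}"
proof -
  have next_vertex: "map w [0..<L] ! ((t + 1) mod L) = step (w t)" if "t < L" for t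
  proof (cases "t + 1 < L")
    case True
    thus ?thesis using walk by simp
  next
    case False
    hence "t + 1 = L" using that by simp
    thus ?thesis using L3 walk[of t] closed by simp
  qed
  show edges: "cycle_edges (map w [0..<L]) = (\<lambda>t. {w t, step (w t)}) ` {0..<L}"
    unfolding cycle_edges_def using next_vertex by force
  show "is_cycle L (cycle_edges (map w [0..<L]))"
    unfolding is_cycle_def using L3 inj
    by (intro conjI exI[of _ "map w [0..<L]"]) (auto simp: distinct_map)
  have "step (w t) \<in> w ` {0..<L}" if "t < L" for t
  proof (cases "Suc t < L")
    case True
    thus ?thesis using walk[of t] by (metis atLeastLessThan_iff image_eqI zero_le)
  next
    case False
    hence "Suc t = L" using that by simp
    thus ?thesis using walk[of t] closed L3 by force
  qed
  thus "\<Union>(cycle_edges (map w [0..<L])) = w ` {0..<L}"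
    unfolding edges by auto
qed

definition diff_step :: "nat \<Rightarrow> nat \<Rightarrow> (nat \<Rightarrow> nat) \<Rightarrow> nat \<times> nat \<Rightarrow> nat \<times> nat" where
  "diff_step M n d v = (Suc (fst v) mod M, (snd v + d (fst v)) mod n)"

definition diff_factor :: "nat \<Rightarrow> nat \<Rightarrow> (nat \<Rightarrow> nat) \<Rightarrow> (nat \<times> nat) set set" where
  "diff_factor M n d = (\<lambda>v. {v, diff_step M n d v}) ` lexV M n"

definition diff_walk :: "nat \<Rightarrow> nat \<Rightarrow> (nat \<Rightarrow> nat) \<Rightarrow> nat \<Rightarrow> nat \<Rightarrow> nat \<times> nat" where
  "diff_walk M n d x t =
     (t mod M, (x + t div M * sum d {..<M} + sum d {..<t mod M}) mod n)"

lemma diff_walk_Suc: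
  assumes "M > 0"
  shows "diff_walk M n d x (Suc t) = diff_step M n d (diff_walk M n d x t)"
proof (cases "Suc (t mod M) < M")
  case True
  hence "Suc t mod M = Suc (t mod M)" "Suc t div M = t div M"
    using assms by (simp_all add: mod_Suc div_Suc)
  thus ?thesis unfolding diff_walk_def diff_step_def using True
    by (simp add: mod_add_left_eq add.assoc)
next
  case False
  hence last: "Suc (t mod M) = M" using assms by (meson Suc_lessI mod_less_divisor)
  hence rem: "Suc t mod M = 0" and quo: "Suc t div M = Suc (t div M)"
    by (simp_all add: mod_Suc div_Suc)
  have "sum d {..<M} = sum d {..<t mod M} + d (t mod M)"
    using last by (metis sum.lessThan_Suc add.commute)
  hence e: "x + Suc (t div M) * sum d {..<M} + sum d {..<0}
      = x + t div M * sum d {..<M} + sum d {..<t mod M} + d (t mod M)"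
    by (simp add: algebra_simps)
  show ?thesis unfolding diff_walk_def diff_step_def rem quo
    by (simp only: e last fst_conv snd_conv mod_add_left_eq mod_self)
qed

lemma diff_walk_less:
  "t < M \<Longrightarrow> diff_walk M n d x t = (t, (x + sum d {..<t}) mod n)"
  by (simp add: diff_walk_def)

lemma diff_walk_in_lexV: "M > 0 \<Longrightarrow> n > 0 \<Longrightarrow> diff_walk M n d x t \<in> lexV M n"
  by (simp add: diff_walk_def lexV_def)

lemma Union_diff_factor: "M > 0 \<Longrightarrow> n > 0 \<Longrightarrow> \<Union>(diff_factor M n d) = lexV M n"
  unfolding diff_factor_def by (auto simp: lexV_def diff_step_def)

lemma diff_factor_subset_lexE:
  assumes "M \<ge> 3"
  shows "diff_factor M n d \<subseteq> lexE M n"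
proof
  fix e assume "e \<in> diff_factor M n d"
  then obtain i y where iy: "i < M" "y < n" "e = {(i, y), (Suc i mod M, (y + d i) mod n)}"
    unfolding diff_factor_def diff_step_def lexV_def by auto
  have "(Suc i mod M + M - i) mod M = 1"
  proof (cases "Suc i < M")
    case True
    hence "Suc i mod M + M - i = Suc M" by simp
    thus ?thesis using assms by (simp add: mod_Suc)
  next
    case False
    hence "Suc i = M" using iy(1) by simp
    thus ?thesis using assms by simp
  qed
  thus "e \<in> lexE M n"
    unfolding lexE_def using iy assms by fastforce
qed

text \<open>Each walk is a cycle of the factor; the card argument shows the walks exhaust the vertices.\<close>
lemma diff_factor_is_Ck_factor:
  assumes M3: "M \<ge> 3" and n0: "n > 0" and L3: "L \<ge> 3" and X: "finite X"
    and closed: "\<And>x. x \<in> X \<Longrightarrow> diff_walk M n d x L = diff_walk M n d x 0"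
    and inj: "inj_on (\<lambda>(x, t). diff_walk M n d x t) (X \<times> {0..<L})"
    and card: "card X * L = M * n"
  shows "is_Ck_factor L (lexV M n) (lexE M n) (diff_factor M n d)"
proof -
  let ?w = "diff_walk M n d" and ?W = "\<lambda>(x, t). diff_walk M n d x t"
  have M0: "M > 0" using M3 by simp
  have "?W ` (X \<times> {0..<L}) \<subseteq> lexV M n" using diff_walk_in_lexV[OF M0 n0] by auto
  moreover have "card (?W ` (X \<times> {0..<L})) = card (lexV M n)"
    using card_image[OF inj] X card by (simp add: lexV_def card_cartesian_product)
  ultimately have onto: "?W ` (X \<times> {0..<L}) = lexV M n"
    by (intro card_subset_eq) (simp_all add: lexV_def)
  have walk_eq: "x = x' \<and> t = t'"
    if "x \<in> X" "x' \<in> X" "t < L" "t' < L" "?w x t = ?w x' t'" for x x' t t'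
    using inj_onD[OF inj, of "(x, t)" "(x', t')"] that by simp
  have inj_x: "inj_on (?w x) {0..<L}" if "x \<in> X" for x
    using walk_eq[OF that that] by (auto intro: inj_onI)
  note cyc = periodic_walk_is_cycle[OF L3 diff_walk_Suc[OF M0] closed inj_x]
  define CC where "CC = (\<lambda>x. cycle_edges (map (?w x) [0..<L])) ` X"
  have "\<Union>CC = (\<Union>x\<in>X. (\<lambda>t. {?w x t, diff_step M n d (?w x t)}) ` {0..<L})"
    unfolding CC_def using cyc(2) by (auto simp del: UN_simps)
  also have "\<dots> = (\<lambda>v. {v, diff_step M n d v}) ` (?W ` (X \<times> {0..<L}))" by auto
  finally have union: "\<Union>CC = diff_factor M n d" unfolding onto diff_factor_def .
  have disjoint: "\<Union>C \<inter> \<Union>D = {}" if CD: "C \<in> CC" "D \<in> CC" "C \<noteq> D" for C D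
  proof -
    obtain x x' where x: "x \<in> X" "x' \<in> X"
      and C: "C = cycle_edges (map (?w x) [0..<L])" and D: "D = cycle_edges (map (?w x') [0..<L])"
      using CD(1,2) unfolding CC_def by blast
    have "x \<noteq> x'" using C D CD(3) by blast
    hence "?w x t \<noteq> ?w x' t'" if "t < L" "t' < L" for t t' using walk_eq[OF x that] by blast
    hence "?w x ` {0..<L} \<inter> ?w x' ` {0..<L} = {}" by fastforce
    thus ?thesis using x by (simp add: C D cyc(3))
  qed
  show ?thesis unfolding is_Ck_factor_def
  proof (intro conjI exI[of _ CC] ballI impI)
    show "diff_factor M n d \<subseteq> lexE M n" by (rule diff_factor_subset_lexE[OF M3])
    show "is_cycle L C" if "C \<in> CC" for C using that cyc(1) unfolding CC_def by blast
    show "\<Union>(diff_factor M n d) = lexV M n" by (rule Union_diff_factor[OF M0 n0])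
  qed (use union disjoint in simp_all)
qed

lemma add_mod_right_cancel_less:
  fixes x y c n :: nat
  assumes "(x + c) mod n = (y + c) mod n" "x < n" "y < n"
  shows "x = y"
proof -
  have "[x + c = y + c] (mod n)" using assms(1) by (simp only: cong_def)
  hence "[x = y] (mod n)" by (simp only: cong_add_rcancel_nat)
  thus ?thesis using assms(2,3) by (simp add: cong_def)
qed

lemma diff_factor_is_CM_factor:
  assumes M3: "M \<ge> 3" and n0: "n > 0" and zero: "sum d {..<M} mod n = 0"
  shows "is_Ck_factor M (lexV M n) (lexE M n) (diff_factor M n d)"
proof (rule diff_factor_is_Ck_factor[OF M3 n0 M3])
  show "diff_walk M n d x M = diff_walk M n d x 0" if "x \<in> {..<n}" for x
    using M3 zero that by (simp add: diff_walk_def mod_add_right_eq[symmetric])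
  show "inj_on (\<lambda>(x, t). diff_walk M n d x t) ({..<n} \<times> {0..<M})"
  proof (rule inj_onI)
    fix p q assume "p \<in> {..<n} \<times> {0..<M}" "q \<in> {..<n} \<times> {0..<M}"
      and eq: "(\<lambda>(x, t). diff_walk M n d x t) p = (\<lambda>(x, t). diff_walk M n d x t) q"
    then obtain x t x' t' where pq: "p = (x, t)" "q = (x', t')"
      and bounds: "x < n" "x' < n" "t < M" "t' < M" by auto
    with eq have "t = t'" "(x + sum d {..<t}) mod n = (x' + sum d {..<t}) mod n"
      by (auto simp: diff_walk_less)
    thus "p = q" using pq bounds add_mod_right_cancel_less by blast
  qed
qed simp_all

lemma diff_factor_is_CMn_factor:
  assumes M3: "M \<ge> 3" and n0: "n > 0" and unit: "coprime (sum d {..<M}) n"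
  shows "is_Ck_factor (M * n) (lexV M n) (lexE M n) (diff_factor M n d)"
proof (rule diff_factor_is_Ck_factor[OF M3 n0, of _ "{0}"])
  have "M * 1 \<le> M * n" using n0 by (intro mult_le_mono2) simp
  thus "M * n \<ge> 3" using M3 by linarith
  show "diff_walk M n d x (M * n) = diff_walk M n d x 0" if "x \<in> {0}" for x
    using that M3 by (simp add: diff_walk_def)
  let ?S = "sum d {..<M}"
  show "inj_on (\<lambda>(x, t). diff_walk M n d x t) ({0} \<times> {0..<M * n})"
  proof (rule inj_onI)
    fix p q assume "p \<in> {0} \<times> {0..<M * n}" "q \<in> {0} \<times> {0..<M * n}"
      and eq: "(\<lambda>(x, t). diff_walk M n d x t) p = (\<lambda>(x, t). diff_walk M n d x t) q"
    then obtain t t' where pq: "p = (0, t)" "q = (0, t')" and t: "t < M * n" "t' < M * n" by auto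
    with eq have "diff_walk M n d 0 t = diff_walk M n d 0 t'" by simp
    hence rem: "t mod M = t' mod M"
      and "[t div M * ?S + sum d {..<t mod M} = t' div M * ?S + sum d {..<t mod M}] (mod n)"
      by (auto simp: diff_walk_def cong_def)
    hence "[t div M * ?S = t' div M * ?S] (mod n)" by (simp only: cong_add_rcancel_nat)
    hence "[t div M = t' div M] (mod n)" using unit by (simp add: cong_mult_rcancel_nat)
    moreover have "t div M < n" "t' div M < n"
      using t by (simp_all add: less_mult_imp_div_less mult.commute)
    ultimately have quo: "t div M = t' div M" by (simp add: cong_def)
    have "t = t div M * M + t mod M" by simp
    also have "\<dots> = t' div M * M + t' mod M" by (simp only: quo rem)
    also have "\<dots> = t'" by simp
    finally show "p = q" using pq by simp
  qed
qed simp_all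

lemma Suc_Suc_mod_neq:
  fixes i M :: nat
  assumes "M \<ge> 3" "i < M"
  shows "Suc (Suc i mod M) mod M \<noteq> i"
  using assms by (cases "Suc i < M"; cases "Suc (Suc i) < M") (auto simp: mod_Suc)

lemma diff_factors_disjoint:
  fixes d :: "nat \<Rightarrow> nat \<Rightarrow> nat"
  assumes M3: "M \<ge> 3" and rs: "r \<noteq> s" "r < n" "s < n"
    and cols: "\<And>i. i < M \<Longrightarrow> inj_on (\<lambda>r. d r i mod n) {..<n}"
  shows "diff_factor M n (d r) \<inter> diff_factor M n (d s) = {}"
proof (rule ccontr)
  assume "diff_factor M n (d r) \<inter> diff_factor M n (d s) \<noteq> {}"
  then obtain v v' where "v \<in> lexV M n" "v' \<in> lexV M n"
    and eq: "{v, diff_step M n (d r) v} = {v', diff_step M n (d s) v'}"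
    unfolding diff_factor_def by blast
  then obtain i y i' y' where iy: "i < M" "i' < M" and v: "v = (i, y)" "v' = (i', y')"
    unfolding lexV_def by (cases v; cases v') auto
  show False
  proof (cases "v = v'")
    case True
    hence "diff_step M n (d r) v = diff_step M n (d s) v"
      using eq by (auto simp: doubleton_eq_iff)
    hence "(y + d r i) mod n = (y + d s i) mod n"
      using v by (simp add: diff_step_def)
    hence "[y + d r i = y + d s i] (mod n)" by (simp only: cong_def)
    hence "[d r i = d s i] (mod n)" by (simp only: cong_add_lcancel_nat)
    hence "d r i mod n = d s i mod n" by (simp only: cong_def)
    thus False using inj_onD[OF cols[OF iy(1)], of r s] rs by blast
  next
    case False
    \<comment> \<open>then the two edges would run in opposite directions, forcing \<open>i \<equiv> i + 2 (mod M)\<close>\<close>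
    hence "v = diff_step M n (d s) v'" "v' = diff_step M n (d r) v"
      using eq by (auto simp: doubleton_eq_iff)
    hence "i = Suc i' mod M" "i' = Suc i mod M"
      using v by (simp_all add: diff_step_def)
    hence "Suc (Suc i mod M) mod M = i" by metis
    with Suc_Suc_mod_neq[OF M3 iy(1)] show False by contradiction
  qed
qed

lemma diff_factors_cover:
  fixes d :: "nat \<Rightarrow> nat \<Rightarrow> nat"
  assumes M3: "M \<ge> 3" and n0: "n > 0" and e: "e \<in> lexE M n"
    and cols: "\<And>i. i < M \<Longrightarrow> inj_on (\<lambda>r. d r i mod n) {..<n}"
  shows "\<exists>r<n. e \<in> diff_factor M n (d r)"
proof -
  have edge: "\<exists>r<n. {(i, x), (Suc i mod M, y)} \<in> diff_factor M n (d r)"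
    if "i < M" "x < n" "y < n" for i x y
  proof -
    let ?f = "\<lambda>r. (x + d r i) mod n"
    have "inj_on ?f {..<n}"
    proof (rule inj_onI)
      fix a b assume ab: "a \<in> {..<n}" "b \<in> {..<n}" "?f a = ?f b"
      hence "[x + d a i = x + d b i] (mod n)" by (simp only: cong_def)
      hence "[d a i = d b i] (mod n)" by (simp only: cong_add_lcancel_nat)
      hence "d a i mod n = d b i mod n" by (simp only: cong_def)
      thus "a = b" using inj_onD[OF cols[OF \<open>i < M\<close>] _ ab(1,2)] by blast
    qed
    hence "?f ` {..<n} = {..<n}" using n0 by (intro endo_inj_surj) auto
    hence "y \<in> ?f ` {..<n}" using \<open>y < n\<close> by simp
    then obtain r where r: "r < n" "?f r = y" by auto
    have "{(i, x), (Suc i mod M, y)} = (\<lambda>v. {v, diff_step M n (d r) v}) (i, x)"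
      using r by (simp add: diff_step_def)
    moreover have "(i, x) \<in> lexV M n" using that by (simp add: lexV_def)
    ultimately show ?thesis unfolding diff_factor_def using r(1) by blast
  qed
  have succ: "b = Suc a mod M" if "a < M" "b < M" "(b + M - a) mod M = 1" for a b
    using that M3 by (auto simp: mod_Suc mod_if split: if_splits)
  from e obtain i x j y where ij: "i < M" "j < M" "x < n" "y < n" and e_eq: "e = {(i, x), (j, y)}"
    and adjacent: "(j + M - i) mod M = 1 \<or> (i + M - j) mod M = 1"
    unfolding lexE_def by blast
  from adjacent show ?thesis
  proof
    assume "(j + M - i) mod M = 1"
    thus ?thesis using edge[of i x y] succ[of i j] ij e_eq by simp
  next
    assume "(i + M - j) mod M = 1"
    hence "\<exists>r<n. {(j, y), (i, x)} \<in> diff_factor M n (d r)" using edge[of j y x] succ[of j i] ij by simp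
    thus ?thesis using e_eq by (simp add: insert_commute)
  qed
qed

lemma HWP_of_indexed_factors:
  fixes F :: "'i \<Rightarrow> 'a set set"
  assumes R: "finite R" and U: "U \<subseteq> R"
    and small: "\<And>r. r \<in> R - U \<Longrightarrow> is_Ck_factor M V E (F r)"
    and large: "\<And>r. r \<in> U \<Longrightarrow> is_Ck_factor N V E (F r)"
    and disjoint: "\<And>r s. r \<in> R \<Longrightarrow> s \<in> R \<Longrightarrow> r \<noteq> s \<Longrightarrow> F r \<inter> F s = {}"
    and cover: "(\<Union>r\<in>R. F r) = E"
  shows "(card R - card U, card U) \<in> HWP V E M N"
proof -
  obtain xs where xs: "set xs = R - U" "distinct xs"
    using finite_distinct_list R by (meson finite_Diff)
  obtain ys where ys: "set ys = U" "distinct ys"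
    using finite_distinct_list R U by (meson finite_subset)
  define zs where "zs = xs @ ys"
  have zs: "set zs = R" "distinct zs" using xs ys U unfolding zs_def by auto
  have len: "length xs = card R - card U" "length ys = card U"
    using distinct_card[OF xs(2)] distinct_card[OF ys(2)] xs(1) ys(1)
      card_Diff_subset[OF finite_subset[OF U R] U] by simp_all
  have len_zs: "length zs = card R - card U + card U" using len unfolding zs_def by simp
  show ?thesis unfolding HWP_def
  proof (intro CollectI case_prodI exI[of _ "\<lambda>i. F (zs ! i)"] conjI allI impI)
    fix i assume "i < card R - card U"
    hence "zs ! i \<in> R - U" using xs(1) len(1) nth_mem[of i xs] unfolding zs_def by (simp add: nth_append)
    thus "is_Ck_factor M V E (F (zs ! i))" by (rule small)
  next
    fix i assume "card R - card U \<le> i \<and> i < card R - card U + card U"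
    hence "\<not> i < length xs" "i - length xs < length ys" using len by linarith+
    hence "zs ! i \<in> U" using ys(1) nth_mem[of "i - length xs" ys] unfolding zs_def
      by (simp add: nth_append)
    thus "is_Ck_factor N V E (F (zs ! i))" by (rule large)
  next
    fix i j assume "i < card R - card U + card U" "j < card R - card U + card U" "i \<noteq> j"
    thus "F (zs ! i) \<inter> F (zs ! j) = {}"
      using zs len_zs by (intro disjoint) (auto simp: nth_eq_iff_index_eq)
  next
    have "(\<Union>i<length zs. F (zs ! i)) = (\<Union>r\<in>set zs. F r)"
      unfolding set_conv_nth by blast
    thus "(\<Union>i<card R - card U + card U. F (zs ! i)) = E" using zs cover len_zs by simp
  qed
qed

lemma diff_array_HWP:
  fixes d :: "nat \<Rightarrow> nat \<Rightarrow> nat"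
  assumes M3: "M \<ge> 3" and n0: "n > 0"
    and cols: "\<And>i. i < M \<Longrightarrow> inj_on (\<lambda>r. d r i mod n) {..<n}"
    and U: "U \<subseteq> {..<n}"
    and unit: "\<And>r. r \<in> U \<Longrightarrow> coprime (sum (d r) {..<M}) n"
    and zero: "\<And>r. r < n \<Longrightarrow> r \<notin> U \<Longrightarrow> sum (d r) {..<M} mod n = 0"
  shows "(n - card U, card U) \<in> HWP (lexV M n) (lexE M n) M (M * n)"
proof -
  have "(card {..<n} - card U, card U) \<in> HWP (lexV M n) (lexE M n) M (M * n)"
  proof (rule HWP_of_indexed_factors[where F = "\<lambda>r. diff_factor M n (d r)"])
    show "is_Ck_factor M (lexV M n) (lexE M n) (diff_factor M n (d r))" if "r \<in> {..<n} - U" for r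
    proof -
      have "r < n" "r \<notin> U" using that by auto
      thus ?thesis by (intro diff_factor_is_CM_factor[OF M3 n0 zero])
    qed
    show "is_Ck_factor (M * n) (lexV M n) (lexE M n) (diff_factor M n (d r))" if "r \<in> U" for r
      by (rule diff_factor_is_CMn_factor[OF M3 n0 unit[OF that]])
    show "diff_factor M n (d r) \<inter> diff_factor M n (d s) = {}"
      if "r \<in> {..<n}" "s \<in> {..<n}" "r \<noteq> s" for r s
    proof -
      have "r < n" "s < n" using that(1,2) by simp_all
      thus ?thesis by (rule diff_factors_disjoint[where d = d, OF M3 that(3) _ _ cols])
    qed
    show "(\<Union>r\<in>{..<n}. diff_factor M n (d r)) = lexE M n"
    proof
      show "(\<Union>r\<in>{..<n}. diff_factor M n (d r)) \<subseteq> lexE M n"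
        using diff_factor_subset_lexE[OF M3] by blast
      show "lexE M n \<subseteq> (\<Union>r\<in>{..<n}. diff_factor M n (d r))"
      proof
        fix e assume e: "e \<in> lexE M n"
        then obtain r where "r < n" "e \<in> diff_factor M n (d r)"
          using diff_factors_cover[where d = d, OF M3 n0 e cols] by blast
        thus "e \<in> (\<Union>r\<in>{..<n}. diff_factor M n (d r))" by blast
      qed
    qed
  qed (use U in auto)
  thus ?thesis by simp
qed

lemma int_diff_array_HWP:
  fixes D :: "nat \<Rightarrow> nat \<Rightarrow> int"
  assumes M3: "M \<ge> 3" and n0: "n > 0"
    and cols: "\<And>i. i < M \<Longrightarrow> inj_on (\<lambda>r. D r i mod int n) {..<n}"
    and U: "U \<subseteq> {..<n}"
    and unit: "\<And>r. r \<in> U \<Longrightarrow> coprime (\<Sum>i<M. D r i) (int n)"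
    and zero: "\<And>r. r < n \<Longrightarrow> r \<notin> U \<Longrightarrow> (\<Sum>i<M. D r i) mod int n = 0"
  shows "(n - card U, card U) \<in> HWP (lexV M n) (lexE M n) M (M * n)"
proof -
  define d where "d r i = nat (D r i mod int n)" for r i
  have d: "int (d r i) = D r i mod int n" for r i
    unfolding d_def using n0 by simp
  have row_sum: "int (sum (d r) {..<M}) mod int n = (\<Sum>i<M. D r i) mod int n" for r
    by (simp add: d mod_sum_eq)
  show ?thesis
  proof (rule diff_array_HWP[OF M3 n0 _ U])
    show "inj_on (\<lambda>r. d r i mod n) {..<n}" if "i < M" for i
    proof (rule inj_onI)
      fix r s assume rs: "r \<in> {..<n}" "s \<in> {..<n}" "d r i mod n = d s i mod n"
      have "d r i < n" "d s i < n" using n0 by (simp_all add: d_def nat_less_iff)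
      hence "int (d r i) = int (d s i)" using rs(3) by simp
      thus "r = s" using inj_onD[OF cols[OF that] _ rs(1,2)] unfolding d by simp
    qed
  next
    fix r assume "r \<in> U"
    hence "coprime ((\<Sum>i<M. D r i) mod int n) (int n)"
      using unit n0 by (subst coprime_mod_left_iff) simp_all
    hence "coprime (int (sum (d r) {..<M}) mod int n) (int n)"
      by (simp only: row_sum)
    hence "coprime (int (sum (d r) {..<M})) (int n)"
      using n0 by (subst (asm) coprime_mod_left_iff) simp_all
    thus "coprime (sum (d r) {..<M}) n" by (simp only: coprime_int_iff)
  next
    fix r assume "r < n" "r \<notin> U"
    hence "int (sum (d r) {..<M}) mod int n = 0" using zero by (simp only: row_sum)
    thus "sum (d r) {..<M} mod n = 0" by (simp only: zmod_int[symmetric] of_nat_eq_0_iff)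
  qed
qed

definition pad_columns :: "nat \<Rightarrow> (nat \<Rightarrow> nat \<Rightarrow> int) \<Rightarrow> nat \<Rightarrow> nat \<Rightarrow> int" where
  "pad_columns K B r i = (if i < K then B r i else if even (i - K) then int r else - int r)"

lemma sum_pad_columns: "(\<Sum>i<K + 2 * t. pad_columns K B r i) = (\<Sum>i<K. B r i)"
  by (induction t) (simp_all add: pad_columns_def)

lemma inj_on_int_mod:
  "inj_on f A \<Longrightarrow> (\<And>r. r \<in> A \<Longrightarrow> f r < n) \<Longrightarrow> inj_on (\<lambda>r. int (f r) mod int n) A"
  by (simp add: inj_on_def)

lemma inj_on_uminus_mod:
  fixes f :: "'a \<Rightarrow> int"
  shows "inj_on (\<lambda>r. f r mod m) A \<Longrightarrow> inj_on (\<lambda>r. (- f r) mod m) A"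
  unfolding inj_on_def by (metis mod_minus_eq minus_minus)

lemma padded_array_HWP:
  fixes B :: "nat \<Rightarrow> nat \<Rightarrow> int"
  assumes M3: "M \<ge> 3" and n0: "n > 0" and M: "M = K + 2 * t"
    and cols: "\<And>i. i < K \<Longrightarrow> inj_on (\<lambda>r. B r i mod int n) {..<n}"
    and U: "U \<subseteq> {..<n}"
    and unit: "\<And>r. r \<in> U \<Longrightarrow> coprime (\<Sum>i<K. B r i) (int n)"
    and zero: "\<And>r. r < n \<Longrightarrow> r \<notin> U \<Longrightarrow> (\<Sum>i<K. B r i) mod int n = 0"
  shows "(n - card U, card U) \<in> HWP (lexV M n) (lexE M n) M (M * n)"
proof (rule int_diff_array_HWP[where D = "pad_columns K B", OF M3 n0 _ U])
  have id_col: "inj_on (\<lambda>r. int r mod int n) {..<n}"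
    using inj_on_int_mod[of id "{..<n}" n] by simp
  show "inj_on (\<lambda>r. pad_columns K B r i mod int n) {..<n}" for i
    using cols id_col inj_on_uminus_mod[OF id_col]
    by (cases "i < K"; cases "even (i - K)") (simp_all add: pad_columns_def)
qed (simp_all add: M sum_pad_columns unit zero)

definition swap_pairs :: "nat \<Rightarrow> nat \<Rightarrow> nat \<Rightarrow> nat" where
  "swap_pairs a j r =
     (if a \<le> r \<and> r < a + 2 * j then if even (r - a) then r + 1 else r - 1 else r)"

lemma swap_pairs_swap_pairs [simp]: "swap_pairs a j (swap_pairs a j r) = r"
  unfolding swap_pairs_def even_iff_mod_2_eq_zero by presburger

lemma inj_swap_pairs: "inj (swap_pairs a j)"
  by (metis injI swap_pairs_swap_pairs)

lemma swap_pairs_inside: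
  "a \<le> r \<Longrightarrow> r < a + 2 * j \<Longrightarrow> a \<le> swap_pairs a j r \<and> swap_pairs a j r < a + 2 * j"
  unfolding swap_pairs_def even_iff_mod_2_eq_zero by presburger

lemma swap_pairs_outside: "\<not> (a \<le> r \<and> r < a + 2 * j) \<Longrightarrow> swap_pairs a j r = r"
  unfolding swap_pairs_def by auto

lemma swap_pairs_less: "a + 2 * j \<le> n \<Longrightarrow> r < n \<Longrightarrow> swap_pairs a j r < n"
  using swap_pairs_inside[of a r j] swap_pairs_outside[of a r j] by fastforce

lemma swap_pairs_diff:
  assumes "a \<le> r" "r < a + 2 * j"
  shows "int (swap_pairs a j r) - int r \<in> {1, -1}"
proof (cases "even (r - a)")
  case True
  thus ?thesis using assms by (simp add: swap_pairs_def)
next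
  case False
  hence "r \<ge> 1" by (cases r) auto
  thus ?thesis using assms False by (simp add: swap_pairs_def of_nat_diff)
qed

lemma coprime_plus_minus_one: "x \<in> {1, -1} \<Longrightarrow> coprime (x :: int) n"
  by auto

lemma even_M_HWP:
  assumes M3: "M \<ge> 3" and M: "even M" and n0: "n > 0" and \<beta>: "even \<beta>" "\<beta> \<le> n"
  shows "(n - \<beta>, \<beta>) \<in> HWP (lexV M n) (lexE M n) M (M * n)"
proof -
  obtain j where j: "\<beta> = 2 * j" using \<beta>(1) by blast
  define t where "t = (M - 2) div 2"
  have t: "M = 2 + 2 * t" unfolding t_def using M M3 by presburger
  define B where "B r (i :: nat) = (if i = 0 then int r else - int (swap_pairs 0 j r))" for r i
  have row_sum: "(\<Sum>i<2. B r i) = int r - int (swap_pairs 0 j r)" for r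
    by (simp add: B_def numeral_2_eq_2)
  have "(n - card {..<2 * j}, card {..<2 * j}) \<in> HWP (lexV M n) (lexE M n) M (M * n)"
  proof (rule padded_array_HWP[OF M3 n0 t])
    have id_col: "inj_on (\<lambda>r. int r mod int n) {..<n}"
      using inj_on_int_mod[of id "{..<n}" n] by simp
    have "inj_on (\<lambda>r. int (swap_pairs 0 j r) mod int n) {..<n}"
      using \<beta> j by (intro inj_on_int_mod inj_on_subset[OF inj_swap_pairs]) (auto intro: swap_pairs_less)
    from inj_on_uminus_mod[OF this]
    show "inj_on (\<lambda>r. B r i mod int n) {..<n}" if "i < 2" for i
      using id_col by (cases "i = 0") (simp_all add: B_def)
    show "coprime (\<Sum>i<2. B r i) (int n)" if "r \<in> {..<2 * j}" for r
      using swap_pairs_diff[of 0 r j] that by (intro coprime_plus_minus_one) (auto simp: row_sum)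
    show "(\<Sum>i<2. B r i) mod int n = 0" if "r < n" "r \<notin> {..<2 * j}" for r
      using that by (simp add: row_sum swap_pairs_outside)
  qed (use \<beta> j in auto)
  thus ?thesis using j by simp
qed

lemma sum_lessThan_3: "(\<Sum>i<3. f i) = f 0 + f 1 + f (2 :: nat)"
  by (simp add: numeral_3_eq_3 numeral_2_eq_2 add.commute add.left_commute)

lemma odd_M_array_HWP:
  fixes b :: "nat \<Rightarrow> nat" and c :: "nat \<Rightarrow> int"
  assumes M3: "M \<ge> 3" and M: "odd M" and n0: "n > 0"
    and b: "inj_on b {..<n}" "\<And>r. r < n \<Longrightarrow> b r < n"
    and c: "inj_on (\<lambda>r. c r mod int n) {..<n}"
    and U: "U \<subseteq> {..<n}"
    and unit: "\<And>r. r \<in> U \<Longrightarrow> coprime (int r + int (b r) + c r) (int n)"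
    and zero: "\<And>r. r < n \<Longrightarrow> r \<notin> U \<Longrightarrow> int r + int (b r) + c r = 0"
  shows "(n - card U, card U) \<in> HWP (lexV M n) (lexE M n) M (M * n)"
proof -
  define t where "t = (M - 3) div 2"
  have t: "M = 3 + 2 * t" unfolding t_def using M M3 by presburger
  define B where "B r (i :: nat) = (if i = 0 then int r else if i = 1 then int (b r) else c r)" for r i
  have row_sum: "(\<Sum>i<3. B r i) = int r + int (b r) + c r" for r
    by (simp add: sum_lessThan_3 B_def)
  show ?thesis
  proof (rule padded_array_HWP[OF M3 n0 t _ U])
    have "inj_on (\<lambda>r. int r mod int n) {..<n}"
      using inj_on_int_mod[of id "{..<n}" n] by simp
    moreover have "inj_on (\<lambda>r. int (b r) mod int n) {..<n}"
      using b by (intro inj_on_int_mod) auto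
    ultimately show "inj_on (\<lambda>r. B r i mod int n) {..<n}" if "i < 3" for i
      using c by (cases "i = 0"; cases "i = 1") (simp_all add: B_def)
  qed (simp_all add: row_sum unit zero)
qed

lemma int_mod_eqI: "x + int n * k = int y \<Longrightarrow> y < n \<Longrightarrow> x mod int n = int y"
  by (metis mod_mult_self2 mod_pos_pos_trivial of_nat_0_le_iff of_nat_less_iff mult.commute)

lemma double_eq_Suc_double_False: "2 * (a :: nat) = Suc (2 * b) \<Longrightarrow> False"
  by presburger

lemma Suc_double_eq_double_False: "Suc (2 * (b :: nat)) = 2 * a \<Longrightarrow> False"
  by presburger

definition colA2 :: "nat \<Rightarrow> nat \<Rightarrow> int" where
  "colA2 m r = (if r < m then - 2 * int r else 1 - 2 * int r)"

lemma inj_on_colA2_mod: "inj_on (\<lambda>r. colA2 m r mod int (2 * m)) {..<2 * m}"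
proof -
  define p where "p r = (if r = 0 then 0 else if r < m then 2 * (m - r)
    else if r = m then Suc (2 * 0) else Suc (2 * (2 * m - r)))" for r
  have res: "colA2 m r mod int (2 * m) = int (p r)" if r: "r < 2 * m" for r
  proof -
    consider "r = 0" | "0 < r" "r < m" | "r = m" | "m < r" by linarith
    thus ?thesis
    proof cases
      case 1 thus ?thesis using r by (simp add: colA2_def p_def)
    next
      case 2 thus ?thesis unfolding colA2_def p_def by (intro int_mod_eqI[where k = 1]) auto
    next
      case 3 thus ?thesis unfolding colA2_def p_def using r by (intro int_mod_eqI[where k = 1]) auto
    next
      case 4 thus ?thesis unfolding colA2_def p_def using r by (intro int_mod_eqI[where k = 2]) auto
    qed
  qed
  have cases_p: "(x = 0 \<and> p x = 2 * 0) \<or> (0 < x \<and> x < m \<and> p x = 2 * (m - x))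
      \<or> (x = m \<and> p x = Suc (2 * 0)) \<or> (m < x \<and> x < 2 * m \<and> p x = Suc (2 * (2 * m - x)))"
    if "x < 2 * m" for x
    unfolding p_def using that by auto
  have "inj_on p {..<2 * m}"
  proof (rule inj_onI)
    fix x y assume "x \<in> {..<2 * m}" "y \<in> {..<2 * m}" "p x = p y"
    thus "x = y" using cases_p[of x] cases_p[of y]
      by (auto dest: double_eq_Suc_double_False Suc_double_eq_double_False)
  qed
  thus ?thesis using res by (simp add: inj_on_def)
qed

text \<open>Row sums: \<open>\<plusminus>1\<close> in rows \<open>0, \<dots>, \<beta> - m - 1\<close>, \<open>1\<close> in rows \<open>m, \<dots>, n - 1\<close> and
  \<open>0\<close> in all other rows.\<close>
lemma odd_M_HWP_large:
  assumes M3: "M \<ge> 3" and M: "odd M" and n: "n = 2 * m" and m: "m > 0"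
    and \<beta>: "m \<le> \<beta>" "\<beta> \<le> n" "even (\<beta> - m)"
  shows "(n - \<beta>, \<beta>) \<in> HWP (lexV M n) (lexE M n) M (M * n)"
proof -
  obtain j where j: "\<beta> - m = 2 * j" using \<beta>(3) by blast
  hence jm: "2 * j \<le> m" using \<beta>(2) n by simp
  define U where "U = {..<2 * j} \<union> {m..<n}"
  have card_U: "card U = \<beta>"
    unfolding U_def using j jm \<beta>(1) n by (subst card_Un_disjoint) auto
  have row_sum: "int r + int (swap_pairs 0 j r) + colA2 m r =
      (if r < m then int (swap_pairs 0 j r) - int r else 1)" for r
    using jm swap_pairs_outside[of 0 r j] by (simp add: colA2_def)
  have "(n - card U, card U) \<in> HWP (lexV M n) (lexE M n) M (M * n)"
  proof (rule odd_M_array_HWP[OF M3 M])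
    show "inj_on (\<lambda>r. colA2 m r mod int n) {..<n}" using inj_on_colA2_mod n by simp
    show "coprime (int r + int (swap_pairs 0 j r) + colA2 m r) (int n)" if "r \<in> U" for r
    proof (rule coprime_plus_minus_one)
      show "int r + int (swap_pairs 0 j r) + colA2 m r \<in> {1, -1}"
        using that swap_pairs_diff[of 0 r j] jm n unfolding U_def by (cases "r < m") (auto simp: row_sum)
    qed
    show "int r + int (swap_pairs 0 j r) + colA2 m r = 0" if "r < n" "r \<notin> U" for r
      using that swap_pairs_outside[of 0 r j] unfolding U_def by (simp add: colA2_def)
  qed (use n m jm in \<open>auto simp: U_def inj_on_subset[OF inj_swap_pairs] swap_pairs_less\<close>)
  thus ?thesis using card_U by simp
qed

definition colB1 :: "nat \<Rightarrow> nat \<Rightarrow> nat \<Rightarrow> nat" where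
  "colB1 m j r = (if r = 1 then m else if r = 2 * m - 1 then 1
     else if m \<le> r then r + 1 else swap_pairs 2 j r)"

definition colB2 :: "nat \<Rightarrow> nat \<Rightarrow> int" where
  "colB2 m r = (if r < m then - 2 * int r else if r = 2 * m - 1 then 1 else - 2 * int r - 1)"

lemma colB1_cases:
  assumes "2 * j + 2 \<le> m" "r < 2 * m"
  shows "(r = 1 \<and> colB1 m j r = m) \<or> (r = 2 * m - 1 \<and> colB1 m j r = 1)
    \<or> (m \<le> r \<and> r < 2 * m - 1 \<and> colB1 m j r = r + 1)
    \<or> (r < m \<and> r \<noteq> 1 \<and> colB1 m j r = swap_pairs 2 j r \<and> swap_pairs 2 j r < m \<and> swap_pairs 2 j r \<noteq> 1)"
proof -
  have "swap_pairs 2 j r < m \<and> swap_pairs 2 j r \<noteq> 1" if "r < m" "r \<noteq> 1"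
    using that assms(1) swap_pairs_inside[of 2 r j] swap_pairs_outside[of 2 r j] by fastforce
  thus ?thesis using assms unfolding colB1_def by auto
qed

lemma colB1_less: "2 * j + 2 \<le> m \<Longrightarrow> r < 2 * m \<Longrightarrow> colB1 m j r < 2 * m"
  using colB1_cases[of j m r] by auto

lemma inj_on_colB1:
  assumes "2 * j + 2 \<le> m"
  shows "inj_on (colB1 m j) {..<2 * m}"
proof (rule inj_onI)
  fix x y assume "x \<in> {..<2 * m}" "y \<in> {..<2 * m}" "colB1 m j x = colB1 m j y"
  thus "x = y" using colB1_cases[OF assms, of x] colB1_cases[OF assms, of y]
    by (auto dest: injD[OF inj_swap_pairs])
qed

lemma inj_on_colB2_mod:
  assumes m: "m \<ge> 2"
  shows "inj_on (\<lambda>r. colB2 m r mod int (2 * m)) {..<2 * m}"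
proof -
  define p where "p r = (if r = 0 then 0 else if r < m then 2 * (m - r)
    else if r = 2 * m - 1 then Suc (2 * 0) else Suc (2 * (2 * m - r - 1)))" for r
  have res: "colB2 m r mod int (2 * m) = int (p r)" if r: "r < 2 * m" for r
  proof -
    consider "r = 0" | "0 < r" "r < m" | "r = 2 * m - 1" | "m \<le> r" "r < 2 * m - 1"
      using r by (cases "r < m"; cases "r = 2 * m - 1") auto
    thus ?thesis
    proof cases
      case 1 thus ?thesis using m by (simp add: colB2_def p_def)
    next
      case 2 thus ?thesis unfolding colB2_def p_def by (intro int_mod_eqI[where k = 1]) auto
    next
      case 3 thus ?thesis unfolding colB2_def p_def using m by (intro int_mod_eqI[where k = 0]) auto
    next
      case 4 thus ?thesis unfolding colB2_def p_def using m by (intro int_mod_eqI[where k = 2]) auto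
    qed
  qed
  have cases_p: "(x = 0 \<and> p x = 2 * 0) \<or> (0 < x \<and> x < m \<and> p x = 2 * (m - x))
      \<or> (x = 2 * m - 1 \<and> p x = Suc (2 * 0)) \<or> (m \<le> x \<and> x < 2 * m - 1 \<and> p x = Suc (2 * (2 * m - x - 1)))"
    if "x < 2 * m" for x
    unfolding p_def using that by auto
  have "inj_on p {..<2 * m}"
  proof (rule inj_onI)
    fix x y assume "x \<in> {..<2 * m}" "y \<in> {..<2 * m}" "p x = p y"
    thus "x = y" using cases_p[of x] cases_p[of y] m
      by (auto dest: double_eq_Suc_double_False Suc_double_eq_double_False)
  qed
  thus ?thesis using res by (simp add: inj_on_def)
qed

text \<open>Row sums: \<open>m - 1\<close> in row \<open>1\<close>, \<open>n + 1\<close> in row \<open>n - 1\<close>, \<open>\<plusminus>1\<close> in rows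
  \<open>2, \<dots>, \<beta> - 1\<close> and \<open>0\<close> in all other rows.\<close>
lemma odd_M_HWP_even_m:
  assumes M3: "M \<ge> 3" and M: "odd M" and n: "n = 2 * m" and m: "even m"
    and \<beta>: "even \<beta>" "0 < \<beta>" "\<beta> \<le> m"
  shows "(n - \<beta>, \<beta>) \<in> HWP (lexV M n) (lexE M n) M (M * n)"
proof -
  define j where "j = \<beta> div 2 - 1"
  have j: "\<beta> = 2 * j + 2" unfolding j_def using \<beta>(1,2) by (auto elim!: evenE)
  hence m2: "m \<ge> 2" and jm: "2 * j + 2 \<le> m" using \<beta>(3) by simp_all
  let ?S = "\<lambda>r. int r + int (colB1 m j r) + colB2 m r"
  define U where "U = {1, 2 * m - 1} \<union> {2..<2 * j + 2}"
  have "1 \<notin> {2..<2 * j + 2}" "2 * m - 1 \<notin> {2..<2 * j + 2}" "1 \<noteq> 2 * m - 1" using jm by auto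
  hence card_U: "card U = \<beta>" unfolding U_def using j by simp
  have "(n - card U, card U) \<in> HWP (lexV M n) (lexE M n) M (M * n)"
  proof (rule odd_M_array_HWP[OF M3 M])
    show "inj_on (\<lambda>r. colB2 m r mod int n) {..<n}" using inj_on_colB2_mod[OF m2] n by simp
    show "coprime (?S r) (int n)" if r: "r \<in> U" for r
    proof -
      consider "r = 1" | "r = 2 * m - 1" | "2 \<le> r" "r < 2 * j + 2" using r unfolding U_def by auto
      thus ?thesis
      proof cases
        case 1
        hence "?S r = int m - 1" using m2 by (simp add: colB1_def colB2_def)
        moreover have "coprime (int m - 1) 2" using m by simp
        ultimately show ?thesis using n by simp
      next
        case 2
        hence "?S r = int n + 1" using m2 n by (simp add: colB1_def colB2_def)
        thus ?thesis by simp
      next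
        case 3
        hence "r \<noteq> 1" "r \<noteq> 2 * m - 1" "r < m" using jm by auto
        hence S: "?S r = int (swap_pairs 2 j r) - int r" by (simp add: colB1_def colB2_def)
        have "?S r \<in> {1, -1}" unfolding S using swap_pairs_diff[of 2 r j] 3 by simp
        thus ?thesis by (rule coprime_plus_minus_one)
      qed
    qed
    show "?S r = 0" if r: "r < n" "r \<notin> U" for r
    proof -
      consider "r = 0" | "2 * j + 2 \<le> r" "r < m" | "m \<le> r" "r < 2 * m - 1"
        using r n unfolding U_def by force
      thus ?thesis
        by cases (use m2 swap_pairs_outside[of 2 r j] in \<open>auto simp: colB1_def colB2_def swap_pairs_def\<close>)
    qed
  qed (use n m2 jm in \<open>auto simp: U_def inj_on_colB1 colB1_less\<close>)
  thus ?thesis using card_U by simp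
qed

definition colC1 :: "nat \<Rightarrow> nat \<Rightarrow> nat \<Rightarrow> nat" where
  "colC1 m j r = (if r = 0 then 1 else if r = 1 then m else if r = 2 * m - 1 then 0
     else if m \<le> r then r + 1 else swap_pairs 2 j r)"

definition colC2 :: "nat \<Rightarrow> nat \<Rightarrow> int" where
  "colC2 m r = (if r = 0 then - 2 else if r = 1 then 1 else if r = 2 * m - 1 then 0
     else if r < m then - 2 * int r else - 2 * int r - 1)"

lemma colC1_cases:
  assumes "2 * j + 2 \<le> m" "r < 2 * m"
  shows "(r = 0 \<and> colC1 m j r = 1) \<or> (r = 1 \<and> colC1 m j r = m) \<or> (r = 2 * m - 1 \<and> colC1 m j r = 0)
    \<or> (m \<le> r \<and> r < 2 * m - 1 \<and> colC1 m j r = r + 1)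
    \<or> (2 \<le> r \<and> r < m \<and> colC1 m j r = swap_pairs 2 j r \<and> 2 \<le> swap_pairs 2 j r \<and> swap_pairs 2 j r < m)"
proof -
  have "2 \<le> swap_pairs 2 j r \<and> swap_pairs 2 j r < m" if "2 \<le> r" "r < m"
    using that assms(1) swap_pairs_inside[of 2 r j] swap_pairs_outside[of 2 r j] by fastforce
  thus ?thesis using assms unfolding colC1_def by auto
qed

lemma colC1_less: "2 * j + 2 \<le> m \<Longrightarrow> r < 2 * m \<Longrightarrow> colC1 m j r < 2 * m"
  using colC1_cases[of j m r] by auto

lemma inj_on_colC1:
  assumes "2 * j + 2 \<le> m"
  shows "inj_on (colC1 m j) {..<2 * m}"
proof (rule inj_onI)
  fix x y assume "x \<in> {..<2 * m}" "y \<in> {..<2 * m}" "colC1 m j x = colC1 m j y"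
  thus "x = y" using colC1_cases[OF assms, of x] colC1_cases[OF assms, of y] assms
    by (auto dest: injD[OF inj_swap_pairs])
qed

lemma inj_on_colC2_mod:
  assumes m: "m \<ge> 2"
  shows "inj_on (\<lambda>r. colC2 m r mod int (2 * m)) {..<2 * m}"
proof -
  define p where "p r = (if r = 0 then 2 * (m - 1) else if r = 1 then Suc (2 * 0)
    else if r = 2 * m - 1 then 2 * 0 else if r < m then 2 * (m - r) else Suc (2 * (2 * m - r - 1)))" for r
  have res: "colC2 m r mod int (2 * m) = int (p r)" if r: "r < 2 * m" for r
  proof -
    consider "r = 0" | "r = 1" | "r = 2 * m - 1" | "2 \<le> r" "r < m" | "m \<le> r" "r < 2 * m - 1"
      using r m by (cases "r = 0"; cases "r = 1"; cases "r < m"; cases "r = 2 * m - 1") auto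
    thus ?thesis
    proof cases
      case 1 thus ?thesis unfolding colC2_def p_def using m by (intro int_mod_eqI[where k = 1]) auto
    next
      case 2 thus ?thesis unfolding colC2_def p_def using m by (intro int_mod_eqI[where k = 0]) auto
    next
      case 3 thus ?thesis using m by (simp add: colC2_def p_def)
    next
      case 4 thus ?thesis unfolding colC2_def p_def by (intro int_mod_eqI[where k = 1]) auto
    next
      case 5 thus ?thesis unfolding colC2_def p_def using m by (intro int_mod_eqI[where k = 2]) auto
    qed
  qed
  have cases_p: "(x = 0 \<and> p x = 2 * (m - 1)) \<or> (x = 1 \<and> p x = Suc (2 * 0)) \<or> (x = 2 * m - 1 \<and> p x = 2 * 0)
      \<or> (2 \<le> x \<and> x < m \<and> p x = 2 * (m - x)) \<or> (m \<le> x \<and> x < 2 * m - 1 \<and> p x = Suc (2 * (2 * m - x - 1)))"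
    if "x < 2 * m" for x
    unfolding p_def using that m by auto
  have "inj_on p {..<2 * m}"
  proof (rule inj_onI)
    fix x y assume "x \<in> {..<2 * m}" "y \<in> {..<2 * m}" "p x = p y"
    thus "x = y" using cases_p[of x] cases_p[of y] m
      by (auto dest: double_eq_Suc_double_False Suc_double_eq_double_False)
  qed
  thus ?thesis using res by (simp add: inj_on_def)
qed

text \<open>Row sums: \<open>-1\<close> in row \<open>0\<close>, \<open>m + 2\<close> in row \<open>1\<close>, \<open>n - 1\<close> in row \<open>n - 1\<close>,
  \<open>\<plusminus>1\<close> in rows \<open>2, \<dots>, \<beta> - 2\<close> and \<open>0\<close> in all other rows.\<close>
lemma odd_M_HWP_odd_m:
  assumes M3: "M \<ge> 3" and M: "odd M" and n: "n = 2 * m" and m: "odd m"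
    and \<beta>: "odd \<beta>" "3 \<le> \<beta>" "\<beta> \<le> m"
  shows "(n - \<beta>, \<beta>) \<in> HWP (lexV M n) (lexE M n) M (M * n)"
proof -
  define j where "j = (\<beta> - 3) div 2"
  have j: "\<beta> = 2 * j + 3" unfolding j_def using \<beta>(1,2) by presburger
  hence m3: "m \<ge> 3" and jm: "2 * j + 2 \<le> m" using \<beta>(3) by simp_all
  let ?S = "\<lambda>r. int r + int (colC1 m j r) + colC2 m r"
  define U where "U = {0, 1, 2 * m - 1} \<union> {2..<2 * j + 2}"
  have "0 \<notin> {2..<2 * j + 2}" "1 \<notin> {2..<2 * j + 2}" "2 * m - 1 \<notin> {2..<2 * j + 2}"
    "0 \<noteq> 2 * m - 1" "1 \<noteq> 2 * m - 1" using jm m3 by auto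
  hence card_U: "card U = \<beta>" unfolding U_def using j by simp
  have "(n - card U, card U) \<in> HWP (lexV M n) (lexE M n) M (M * n)"
  proof (rule odd_M_array_HWP[OF M3 M])
    show "inj_on (\<lambda>r. colC2 m r mod int n) {..<n}" using inj_on_colC2_mod m3 n by simp
    show "coprime (?S r) (int n)" if r: "r \<in> U" for r
    proof -
      consider "r = 0" | "r = 1" | "r = 2 * m - 1" | "2 \<le> r" "r < 2 * j + 2"
        using r unfolding U_def by auto
      thus ?thesis
      proof cases
        case 1
        hence "?S r = - 1" by (simp add: colC1_def colC2_def)
        thus ?thesis by simp
      next
        case 2
        hence S: "?S r = int m + 2" using m3 by (simp add: colC1_def colC2_def)
        have "gcd (int m + 2) (int m) = gcd 2 (int m)" by (metis add.commute gcd_add1)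
        moreover have "coprime 2 (int m)" using m by simp
        ultimately have "coprime (int m + 2) (int m)" by (simp add: coprime_iff_gcd_eq_1)
        moreover have "coprime (int m + 2) 2" using m by simp
        ultimately show ?thesis unfolding S using n by simp
      next
        case 3
        hence "?S r = int n - 1" using m3 n by (simp add: colC1_def colC2_def)
        thus ?thesis by simp
      next
        case 4
        hence "r \<noteq> 0" "r \<noteq> 1" "r \<noteq> 2 * m - 1" "r < m" using jm by auto
        hence S: "?S r = int (swap_pairs 2 j r) - int r" by (simp add: colC1_def colC2_def)
        have "?S r \<in> {1, -1}" unfolding S using swap_pairs_diff[of 2 r j] 4 by simp
        thus ?thesis by (rule coprime_plus_minus_one)
      qed
    qed
    show "?S r = 0" if r: "r < n" "r \<notin> U" for r
    proof -
      consider "2 * j + 2 \<le> r" "r < m" | "m \<le> r" "r < 2 * m - 1"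
        using r n unfolding U_def by force
      thus ?thesis
        by cases (use m3 swap_pairs_outside[of 2 r j] in \<open>auto simp: colC1_def colC2_def\<close>)
    qed
  qed (use n m3 jm in \<open>auto simp: U_def inj_on_colC1 colC1_less\<close>)
  thus ?thesis using card_U by simp
qed

lemma odd_M_HWP:
  assumes M3: "M \<ge> 3" and M: "odd M" and n: "n = 2 * m" and \<beta>: "0 < \<beta>" "\<beta> \<le> n"
    and parity: "even \<beta> \<longleftrightarrow> even m" and one: "odd m \<Longrightarrow> 1 < m \<Longrightarrow> \<beta> \<noteq> 1"
  shows "(n - \<beta>, \<beta>) \<in> HWP (lexV M n) (lexE M n) M (M * n)"
proof -
  consider "m \<le> \<beta>" | "\<beta> < m" "even m" | "\<beta> < m" "odd m" by linarith
  thus ?thesis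
  proof cases
    case 1
    thus ?thesis using M3 M n \<beta> parity by (intro odd_M_HWP_large[where m = m]) auto
  next
    case 2
    thus ?thesis using M3 M n \<beta> parity by (intro odd_M_HWP_even_m[where m = m]) auto
  next
    case 3
    have "1 < m" using 3(1) \<beta>(1) by simp
    hence "\<beta> \<noteq> 1" by (rule one[OF 3(2)])
    hence "3 \<le> \<beta>" using parity 3(2) \<beta>(1) by presburger
    thus ?thesis using M3 M n 3 parity by (intro odd_M_HWP_odd_m[where m = m]) auto
  qed
qed

lemma odd_mul_double_mod_4:
  fixes M m :: nat
  assumes "odd M" "odd m"
  shows "M * (2 * m) mod 4 = 2"
proof -
  have "odd (M * m)" using assms by simp
  then obtain q where q: "M * m = 2 * q + 1" by (rule oddE)
  have "M * (2 * m) = 2 * (M * m)" by simp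
  also have "\<dots> = 4 * q + 2" using q by simp
  finally show ?thesis by presburger
qed

theorem mainTheorem5:
  fixes n M \<beta> :: nat
  assumes "n \<ge> 2" and "even n" and "M \<ge> 3"
    and "0 < \<beta>" and "\<beta> \<le> n"
    and "\<beta> mod 2 = (M * n div 2) mod 2"
    and "M * n mod 4 = 2 \<and> n > 2 \<longrightarrow> \<beta> \<noteq> 1"
  shows "(n - \<beta>, \<beta>) \<in> HWP (lexV M n) (lexE M n) M (M * n)"
proof -
  obtain m where n: "n = 2 * m" using \<open>even n\<close> ..
  have parity: "even \<beta> \<longleftrightarrow> even (M * m)"
    using assms(6) n by (simp add: even_iff_mod_2_eq_zero)
  show ?thesis
  proof (cases "even M")
    case True
    thus ?thesis using parity assms(1,3,5) n by (intro even_M_HWP) auto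
  next
    case False
    have "\<beta> \<noteq> 1" if "odd m" "1 < m"
      using assms(7) odd_mul_double_mod_4[OF False that(1)] n that(2) by simp
    thus ?thesis using False parity n assms(3,4,5) by (intro odd_M_HWP[where m = m]) auto
  qed
qed

end
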